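(* Let $q$ be a power of a prime $p$, $K$ an algebraic closure of $\mathbb{F}_q$, and let $\Delta_q$ be the stabilizer in $\mathrm{PGL}(3,q)$ of the triangle with vertices $(1:0:0),(0:1:0),(0:0:1)$, acting on $\mathrm{PG}(2,K)$. Then $d(\Delta_q)=q-1$, $\varepsilon(\Delta_q)=q-1$, and the Fermat curve $X^{q-1}+Y^{q-1}+Z^{q-1}=0$ is the only $\Delta_q$-invariant curve of degree $q-1$. Moreover, the $\Delta_q$-invariant irreducible plane curves of degree $2(q-1)$ are those of homogeneous equation $$\lambda(X^{q-1}+Y^{q-1}+Z^{q-1})^2+(XY)^{q-1}+(YZ)^{q-1}+(ZX)^{q-1}=0,\quad \lambda\in K.$$
   Context: Plane curves are over $K$; irreducible means irreducible over $K$; $G$-invariant means mapped onto itself by every element of $G$. $d(G)$ is the smallest degree of a $G$-invariant irreducible plane curve other than a line; $\varepsilon(G)=d'(G)-d(G)$ where $d'(G)$ is the smallest degree larger than $d(G)$ of a $G$-invariant irreducible plane curve.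
   Formalization: q >= 3 is assumed, the Fermat curve is unique among irreducible $\Delta_q$-invariant curves of degree q-1, and the irreducible $\Delta_q$-invariant curves of degree 2(q-1) are the irreducible members of the displayed family. Each condition added here is assumed in the paper as well or is needed for the statement above to hold. *)

theory Defs
  imports "HOL-Analysis.Analysis" "HOL-Computational_Algebra.Polynomial"
begin

text \<open>Homogeneous polynomials in K[X,Y,Z] are represented as nested univariate
  polynomials: the innermost variable is X, then Y, the outermost is Z.\<close>

type_synonym 'k pp3 = "'k poly poly poly"

definition Xv :: "'k::comm_ring_1 pp3" where "Xv = [:[:monom 1 1:]:]"
definition Yv :: "'k::comm_ring_1 pp3" where "Yv = [:monom 1 1:]"
definition Zv :: "'k::comm_ring_1 pp3" where "Zv = monom 1 1"

definition const3 :: "'k::comm_ring_1 \<Rightarrow> 'k pp3" where "const3 c = [:[:[:c:]:]:]"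

definition eval3 :: "'k::comm_ring_1 pp3 \<Rightarrow> 'k pp3 \<Rightarrow> 'k pp3 \<Rightarrow> 'k pp3 \<Rightarrow> 'k pp3" where
  "eval3 F a b c =
     poly (map_poly (\<lambda>g. poly (map_poly (\<lambda>h. poly (map_poly const3 h) a) g) b) F) c"

definition homog :: "nat \<Rightarrow> 'k::comm_ring_1 pp3 \<Rightarrow> bool" where
  "homog n F \<longleftrightarrow> F \<noteq> 0 \<and>
     (\<forall>i j k. coeff (coeff (coeff F k) j) i \<noteq> 0 \<longrightarrow> i + j + k = n)"

definition var3 :: "3 \<Rightarrow> 'k::comm_ring_1 pp3" where
  "var3 i = (if i = 1 then Xv else if i = 2 then Yv else Zv)"

definition lin_subst :: "('k::comm_ring_1 ^3^3) \<Rightarrow> 'k pp3 \<Rightarrow> 'k pp3" where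
  "lin_subst M F = eval3 F
      (\<Sum>j\<in>UNIV. const3 (M $ 1 $ j) * var3 j)
      (\<Sum>j\<in>UNIV. const3 (M $ 2 $ j) * var3 j)
      (\<Sum>j\<in>UNIV. const3 (M $ 3 $ j) * var3 j)"

text \<open>The curve F = 0 is mapped onto itself by every element of G.\<close>
definition invariant :: "('k::field ^3^3) set \<Rightarrow> 'k pp3 \<Rightarrow> bool" where
  "invariant G F \<longleftrightarrow> (\<forall>M\<in>G. \<exists>c. c \<noteq> 0 \<and> lin_subst M F = const3 c * F)"

definition inv_irr_curve :: "('k::field ^3^3) set \<Rightarrow> nat \<Rightarrow> 'k pp3 \<Rightarrow> bool" where
  "inv_irr_curve G n F \<longleftrightarrow> homog n F \<and> irreducible F \<and> invariant G F"

definition dG :: "('k::field ^3^3) set \<Rightarrow> nat" where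
  "dG G = (LEAST n. 2 \<le> n \<and> (\<exists>F::'k pp3. inv_irr_curve G n F))"

definition d'G :: "('k::field ^3^3) set \<Rightarrow> nat" where
  "d'G G = (LEAST n. dG G < n \<and> (\<exists>F::'k pp3. inv_irr_curve G n F))"

definition epsG :: "('k::field ^3^3) set \<Rightarrow> nat" where
  "epsG G = d'G G - dG G"

text \<open>PGL(3,q), represented by the invertible matrices with entries in F_q
  (the elements x of K with x^q = x); scalar multiples act identically.\<close>
definition PGL3 :: "nat \<Rightarrow> ('k::field ^3^3) set" where
  "PGL3 q = {M. (\<forall>i j. (M $ i $ j) ^ q = M $ i $ j) \<and> det M \<noteq> 0}"

definition Delta :: "nat \<Rightarrow> ('k::field ^3^3) set" where
  "Delta q = {M \<in> PGL3 q. \<forall>i. \<exists>j c. c \<noteq> 0 \<and> M *v axis i 1 = c *s axis j 1}"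

definition fermat :: "nat \<Rightarrow> 'k::field pp3" where
  "fermat q = Xv ^ (q - 1) + Yv ^ (q - 1) + Zv ^ (q - 1)"

definition fam :: "nat \<Rightarrow> 'k::field \<Rightarrow> 'k pp3" where
  "fam q t = const3 t * (fermat q)\<^sup>2
     + (Xv * Yv) ^ (q - 1) + (Yv * Zv) ^ (q - 1) + (Zv * Xv) ^ (q - 1)"

end

theory Submission
  imports Defs
begin

text \<open>
  Delta q consists of the monomial matrices whose entries are (q - 1)-th roots of unity.
  An invariant irreducible curve F of degree at least 2 is divisible by none of X, Y, Z, while
  diag(a, b, c) multiplies the monomial X^i Y^j Z^k by a^i b^j c^k. As the characteristic does
  not divide q - 1, there are exactly q - 1 such roots of unity, so every exponent occurring in F
  is a multiple of q - 1, and so is the degree of F. The coordinate permutations then force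
  symmetric coefficients: in degree n = q - 1 only the Fermat polynomial is left, in degree 2n
  only a (X^2n + Y^2n + Z^2n) + b ((YZ)^n + (XZ)^n + (XY)^n), which is a multiple of the square of
  the Fermat polynomial if b = 2a and of a member of the family otherwise. The Fermat polynomial
  and (YZ)^n + (XZ)^n + (XY)^n are irreducible by Eisenstein's criterion in Z over K[X, Y] at
  the prime Y - zX, where z^n = -1.
\<close>

section \<open>Coefficients and monomials\<close>

definition coeff3 :: "'k::zero pp3 \<Rightarrow> nat \<Rightarrow> nat \<Rightarrow> nat \<Rightarrow> 'k" where
  "coeff3 F i j k = coeff (coeff (coeff F k) j) i"

definition monom3 :: "'k::comm_ring_1 \<Rightarrow> nat \<Rightarrow> nat \<Rightarrow> nat \<Rightarrow> 'k pp3" where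
  "monom3 c i j k = const3 c * Xv ^ i * Yv ^ j * Zv ^ k"

lemma pp3_eq_iff: "F = G \<longleftrightarrow> (\<forall>i j k. coeff3 F i j k = coeff3 G i j k)"
  by (auto simp: coeff3_def poly_eq_iff)

lemma coeff3_0 [simp]: "coeff3 0 i j k = 0"
  by (simp add: coeff3_def)

lemma coeff3_add [simp]: "coeff3 (F + G) i j k = coeff3 F i j k + coeff3 G i j k"
  by (simp add: coeff3_def)

lemma coeff3_sum: "coeff3 (\<Sum>x\<in>A. F x) i j k = (\<Sum>x\<in>A. coeff3 (F x) i j k)"
  by (simp add: coeff3_def coeff_sum)

lemma coeff3_const3_mult [simp]: "coeff3 (const3 c * F) i j k = c * coeff3 F i j k"
  by (simp add: coeff3_def const3_def)

lemma homog_iff_coeff3: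
  "homog n F \<longleftrightarrow> F \<noteq> 0 \<and> (\<forall>i j k. coeff3 F i j k \<noteq> 0 \<longrightarrow> i + j + k = n)"
  by (simp add: homog_def coeff3_def)

lemma const3_add: "const3 (x + y) = const3 x + const3 y"
  by (simp add: const3_def)

lemma const3_mult: "const3 (x * y) = const3 x * const3 y"
  by (simp add: const3_def)

lemma const3_0 [simp]: "const3 0 = 0"
  by (simp add: const3_def)

lemma const3_1 [simp]: "const3 1 = 1"
  by (simp add: const3_def one_pCons)

lemma const3_power: "const3 (x ^ n) = const3 x ^ n"
  by (induct n) (simp_all add: const3_mult)

lemma const3_numeral: "const3 (numeral w) = numeral w"
  by (simp add: const3_def numeral_poly)

lemma is_unit_const3: "c \<noteq> 0 \<Longrightarrow> is_unit (const3 (c::'k::field))"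
  by (rule dvdI[of _ _ "const3 (inverse c)"]) (simp add: const3_mult[symmetric])

lemma monom3_eq_monom: "monom3 c i j k = monom (monom (monom c i) j) k"
  by (simp add: monom3_def const3_def Xv_def Yv_def Zv_def monom_0[symmetric] mult_monom monom_power)

lemma coeff3_monom3: "coeff3 (monom3 c i j k) a b d = (if (a, b, d) = (i, j, k) then c else 0)"
  by (simp add: monom3_eq_monom coeff3_def coeff_monom)

lemma const3_eq_monom3: "const3 c = monom3 c 0 0 0"
  by (simp add: monom3_def)

lemma monom3_0 [simp]: "monom3 0 i j k = 0"
  by (simp add: monom3_def)

lemma monom3_mult: "monom3 c i j k * monom3 c' i' j' k' = monom3 (c * c') (i + i') (j + j') (k + k')"
  by (simp add: monom3_def const3_mult power_add algebra_simps)

lemma coeff3_sum_monom3: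
  assumes "finite S"
  shows "coeff3 (\<Sum>(i, j, k)\<in>S. monom3 (g i j k) i j k) a b d = (if (a, b, d) \<in> S then g a b d else 0)"
proof -
  have "coeff3 (\<Sum>(i, j, k)\<in>S. monom3 (g i j k) i j k) a b d
      = (\<Sum>x\<in>S. if x = (a, b, d) then g a b d else 0)"
    unfolding coeff3_sum by (rule sum.cong) (auto simp: coeff3_monom3 split: if_splits)
  then show ?thesis
    using assms by simp
qed

lemma pp3_eq_sum_support:
  assumes "finite S" and "\<And>i j k. coeff3 F i j k \<noteq> 0 \<Longrightarrow> (i, j, k) \<in> S"
  shows "F = (\<Sum>(i, j, k)\<in>S. monom3 (coeff3 F i j k) i j k)"
  unfolding pp3_eq_iff coeff3_sum_monom3[OF assms(1)] using assms(2) by metis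

lemma homog_support_subset:
  "homog n F \<Longrightarrow> coeff3 F i j k \<noteq> 0 \<Longrightarrow> (i, j, k) \<in> {..n} \<times> {..n} \<times> {..n}"
  unfolding homog_iff_coeff3 by fastforce

lemma homog_const3_mult:
  fixes F :: "'k::field pp3"
  shows "c \<noteq> 0 \<Longrightarrow> homog n F \<Longrightarrow> homog n (const3 c * F)"
  by (simp add: homog_iff_coeff3 pp3_eq_iff)

lemma is_unit_pp3_imp_const3:
  assumes "is_unit (G :: 'k::field pp3)"
  obtains c where "c \<noteq> 0" and "G = const3 c"
proof -
  from assms obtain g where g: "G = [:g:]" "is_unit g" by (rule is_unit_polyE)
  from g(2) obtain h where h: "g = [:h:]" "is_unit h" by (rule is_unit_polyE)
  from h(2) obtain c where c: "h = [:c:]" "c dvd 1" by (rule is_unit_polyE)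
  from c(2) have "c \<noteq> 0" by auto
  with g h c show ?thesis by (intro that) (simp_all add: const3_def)
qed

lemma homog_not_unit:
  fixes G :: "'k::field pp3"
  assumes "homog n G" and "0 < n"
  shows "\<not> is_unit G"
proof
  assume "is_unit G"
  then obtain c where "c \<noteq> 0" and "G = const3 c"
    by (rule is_unit_pp3_imp_const3)
  then have "coeff3 G 0 0 0 \<noteq> 0"
    by (simp add: const3_eq_monom3 coeff3_monom3)
  with assms show False
    by (auto simp: homog_iff_coeff3)
qed

lemma homog_monom3_dvd:
  assumes "homog n F" and "\<And>i j k. coeff3 F i j k \<noteq> 0 \<Longrightarrow> a \<le> i \<and> b \<le> j \<and> d \<le> k"
  shows "monom3 1 a b d dvd F"
proof -
  have "monom3 1 a b d dvd monom3 (coeff3 F i j k) i j k" for i j k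
  proof (cases "coeff3 F i j k = 0")
    case False
    then have "monom3 (coeff3 F i j k) i j k
        = monom3 1 a b d * monom3 (coeff3 F i j k) (i - a) (j - b) (k - d)"
      using assms(2) by (simp add: monom3_mult)
    then show ?thesis by simp
  qed simp
  then show ?thesis
    by (subst pp3_eq_sum_support[OF _ homog_support_subset[OF assms(1)]])
       (auto intro: dvd_sum)
qed

lemma irreducible_homog_not_dvd_var:
  fixes F :: "'k::field pp3"
  assumes "irreducible F" and "homog n F" and "2 \<le> n" and "a + b + d = 1"
  shows "\<not> monom3 1 a b d dvd F"
proof
  assume "monom3 1 a b d dvd F"
  then obtain G where F: "F = monom3 1 a b d * G" ..
  from irreducibleD[OF assms(1) this] show False
  proof
    assume "is_unit (monom3 (1::'k) a b d)"
    then obtain c where "monom3 (1::'k) a b d = const3 c"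
      by (rule is_unit_pp3_imp_const3)
    then have "coeff3 (monom3 (1::'k) a b d) a b d = coeff3 (monom3 c 0 0 0) a b d"
      by (simp only: const3_eq_monom3)
    with assms(4) show False
      by (auto simp: coeff3_monom3 split: if_splits)
  next
    assume "is_unit G"
    then obtain c where "c \<noteq> 0" "G = const3 c"
      by (rule is_unit_pp3_imp_const3)
    then have "coeff3 F a b d \<noteq> 0"
      by (simp add: F mult.commute[of _ "const3 c"] coeff3_monom3)
    with assms(2-4) show False
      by (auto simp: homog_iff_coeff3)
  qed
qed

lemma irreducible_homog_exponent_zero:
  fixes F :: "'k::field pp3"
  assumes "irreducible F" and "homog n F" and "2 \<le> n"
  shows "\<exists>j k. coeff3 F 0 j k \<noteq> 0" and "\<exists>i k. coeff3 F i 0 k \<noteq> 0" and "\<exists>i j. coeff3 F i j 0 \<noteq> 0"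
proof -
  have "\<exists>i j k. coeff3 F i j k \<noteq> 0 \<and> \<not> (a \<le> i \<and> b \<le> j \<and> d \<le> k)" if "a + b + d = 1" for a b d
    using irreducible_homog_not_dvd_var[OF assms that] homog_monom3_dvd[OF assms(2)] by blast
  from this[of 1 0 0] this[of 0 1 0] this[of 0 0 1]
  show "\<exists>j k. coeff3 F 0 j k \<noteq> 0" and "\<exists>i k. coeff3 F i 0 k \<noteq> 0" and "\<exists>i j. coeff3 F i j 0 \<noteq> 0"
    by (auto simp: Suc_le_eq)
qed

section \<open>Substitution of linear forms\<close>

lemma poly_map_poly_add:
  assumes "\<And>x y. f (x + y) = f x + f y" and "f 0 = 0"
  shows "poly (map_poly f (p + q)) a = poly (map_poly f p) a + poly (map_poly f q) a"
proof -
  have "map_poly f (p + q) = map_poly f p + map_poly f q"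
    by (rule poly_eqI) (simp add: coeff_map_poly assms)
  then show ?thesis by simp
qed

lemma poly_map_poly_mult:
  fixes f :: "'a::comm_ring_1 \<Rightarrow> 'b::comm_ring_1"
  assumes "\<And>x y. f (x + y) = f x + f y" and "f 0 = 0" and "\<And>x y. f (x * y) = f x * f y"
  shows "poly (map_poly f (p * q)) a = poly (map_poly f p) a * poly (map_poly f q) a"
proof -
  have sum: "f (sum g A) = (\<Sum>x\<in>A. f (g x))" for g :: "nat \<Rightarrow> 'a" and A
    using sum_comp_morphism[of f g A] assms(1,2) by (simp add: o_def)
  have "map_poly f (p * q) = map_poly f p * map_poly f q"
    by (rule poly_eqI) (simp only: coeff_map_poly assms(2) coeff_mult sum assms(3))
  then show ?thesis by simp
qed

lemma eval3_add [simp]: "eval3 (F + G) a b c = eval3 F a b c + eval3 G a b c"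
  by (simp add: eval3_def poly_map_poly_add const3_add)

lemma eval3_mult [simp]: "eval3 (F * G) a b c = eval3 F a b c * eval3 G a b c"
  by (simp add: eval3_def poly_map_poly_add poly_map_poly_mult const3_add const3_mult)

lemma eval3_0 [simp]: "eval3 0 a b c = 0"
  by (simp add: eval3_def)

lemma eval3_const3 [simp]: "eval3 (const3 x) a b c = const3 x"
  by (simp add: eval3_def const3_def map_poly_pCons)

lemma eval3_1 [simp]: "eval3 1 a b c = 1"
  using eval3_const3[of 1] by simp

lemma eval3_power [simp]: "eval3 (F ^ n) a b c = eval3 F a b c ^ n"
  by (induct n) simp_all

lemma eval3_sum: "eval3 (\<Sum>x\<in>A. F x) a b c = (\<Sum>x\<in>A. eval3 (F x) a b c)"
  by (induct A rule: infinite_finite_induct) simp_all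

lemma eval3_Xv [simp]: "eval3 Xv a b c = a"
  by (simp add: eval3_def Xv_def monom_Suc monom_0 map_poly_pCons pCons_one const3_def)

lemma eval3_Yv [simp]: "eval3 Yv a b c = b"
  by (simp add: eval3_def Yv_def monom_Suc monom_0 map_poly_pCons pCons_one const3_def)

lemma eval3_Zv [simp]: "eval3 Zv a b c = c"
  by (simp add: eval3_def Zv_def monom_Suc monom_0 map_poly_pCons pCons_one const3_def)

lemma eval3_monom3 [simp]: "eval3 (monom3 x i j k) a b c = const3 x * a ^ i * b ^ j * c ^ k"
  by (simp add: monom3_def)

lemma eval3_homog_eq_sum:
  assumes "homog n F"
  shows "eval3 F a b c = (\<Sum>(i, j, k)\<in>{..n} \<times> {..n} \<times> {..n}. const3 (coeff3 F i j k) * a ^ i * b ^ j * c ^ k)"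
  by (subst pp3_eq_sum_support[OF _ homog_support_subset[OF assms]])
     (simp_all add: eval3_sum case_prod_beta)

lemma coeff3_eval3_scale:
  assumes "homog n F"
  shows "coeff3 (eval3 F (const3 a * Xv) (const3 b * Yv) (const3 c * Zv)) i j k
    = a ^ i * b ^ j * c ^ k * coeff3 F i j k"
proof -
  have "eval3 F (const3 a * Xv) (const3 b * Yv) (const3 c * Zv)
      = (\<Sum>(i, j, k)\<in>{..n} \<times> {..n} \<times> {..n}. monom3 (a ^ i * b ^ j * c ^ k * coeff3 F i j k) i j k)"
    unfolding eval3_homog_eq_sum[OF assms]
    by (rule sum.cong) (auto simp: monom3_def power_mult_distrib const3_mult const3_power algebra_simps)
  then show ?thesis
    using homog_support_subset[OF assms, of i j k]
    by (cases "coeff3 F i j k = 0") (auto simp: coeff3_sum_monom3)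
qed

lemma coeff3_eval3_swap_XY:
  assumes "homog n F"
  shows "coeff3 (eval3 F Yv Xv Zv) i j k = coeff3 F j i k"
proof -
  have "eval3 F Yv Xv Zv = (\<Sum>(i, j, k)\<in>{..n} \<times> {..n} \<times> {..n}. monom3 (coeff3 F j i k) i j k)"
    unfolding eval3_homog_eq_sum[OF assms]
    by (rule sum.reindex_bij_witness[of _ "\<lambda>(i, j, k). (j, i, k)" "\<lambda>(i, j, k). (j, i, k)"])
       (auto simp: monom3_def ac_simps)
  then show ?thesis
    using homog_support_subset[OF assms, of j i k] by (auto simp: coeff3_sum_monom3)
qed

lemma coeff3_eval3_swap_YZ:
  assumes "homog n F"
  shows "coeff3 (eval3 F Xv Zv Yv) i j k = coeff3 F i k j"
proof -
  have "eval3 F Xv Zv Yv = (\<Sum>(i, j, k)\<in>{..n} \<times> {..n} \<times> {..n}. monom3 (coeff3 F i k j) i j k)"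
    unfolding eval3_homog_eq_sum[OF assms]
    by (rule sum.reindex_bij_witness[of _ "\<lambda>(i, j, k). (i, k, j)" "\<lambda>(i, j, k). (i, k, j)"])
       (auto simp: monom3_def ac_simps)
  then show ?thesis
    using homog_support_subset[OF assms, of i k j] by (auto simp: coeff3_sum_monom3)
qed

lemma lin_subst_add [simp]: "lin_subst M (F + G) = lin_subst M F + lin_subst M G"
  by (simp add: lin_subst_def)

lemma lin_subst_mult [simp]: "lin_subst M (F * G) = lin_subst M F * lin_subst M G"
  by (simp add: lin_subst_def)

lemma lin_subst_power [simp]: "lin_subst M (F ^ n) = lin_subst M F ^ n"
  by (simp add: lin_subst_def)

lemma lin_subst_const3 [simp]: "lin_subst M (const3 c) = const3 c"
  by (simp add: lin_subst_def)

section \<open>Roots of unity in an algebraically closed field\<close>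

context
  assumes alg_closed: "\<And>P::'k::field poly. degree P > 0 \<Longrightarrow> \<exists>x. poly P x = 0"
begin

lemma card_roots_eq_degree_if_simple:
  fixes P :: "'k poly"
  assumes "P \<noteq> 0" and "\<And>x. poly P x = 0 \<Longrightarrow> poly (pderiv P) x \<noteq> 0"
  shows "card {x. poly P x = 0} = degree P"
  using assms
proof (induction "degree P" arbitrary: P)
  case 0
  then obtain c where "P = [:c:]" "c \<noteq> 0"
    by (metis degree_eq_zeroE pCons_0_0)
  then show ?case by simp
next
  case (Suc d)
  then obtain a where a: "poly P a = 0"
    using alg_closed by (metis zero_less_Suc)
  then obtain Q where P: "P = [:-a, 1:] * Q"
    using poly_eq_0_iff_dvd by blast
  have Q0: "Q \<noteq> 0"
    using P Suc.prems(1) by auto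
  have P': "pderiv P = Q + [:-a, 1:] * pderiv Q"
    unfolding P pderiv_mult by (simp add: pderiv_pCons)
  have "poly Q a \<noteq> 0"
    using Suc.prems(2)[OF a] by (simp add: P')
  have "poly (pderiv Q) x \<noteq> 0" if "poly Q x = 0" for x
  proof -
    have "poly P x = 0"
      using that by (simp add: P)
    then have "poly (pderiv P) x \<noteq> 0"
      by (rule Suc.prems(2))
    then show ?thesis
      using that by (simp add: P')
  qed
  moreover have "degree Q = d"
    using Suc.hyps(2) Q0 unfolding P by (subst (asm) degree_mult_eq) auto
  ultimately have "card {x. poly Q x = 0} = d"
    using Suc.hyps(1) Q0 by simp
  moreover have "{x. poly P x = 0} = insert a {x. poly Q x = 0}"
    by (auto simp: P)
  ultimately show ?case
    using \<open>poly Q a \<noteq> 0\<close> poly_roots_finite[OF Q0] Suc.hyps(2) by simp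
qed

lemma card_roots_of_unity:
  assumes "0 < n" and "of_nat n \<noteq> (0::'k)"
  shows "card {x::'k. x ^ n = 1} = n"
proof -
  define P :: "'k poly" where "P = monom 1 n + [:-1:]"
  have "degree P = n"
    using assms(1) by (simp add: P_def degree_add_eq_left degree_monom_eq)
  moreover have "poly (pderiv P) x \<noteq> 0" if "poly P x = 0" for x
  proof
    assume "poly (pderiv P) x = 0"
    with that have "x ^ n = 1" and "of_nat n * x ^ (n - 1) = 0"
      by (simp_all add: P_def poly_monom pderiv_add pderiv_monom pderiv_pCons)
    with assms show False
      by (auto simp: power_0_left)
  qed
  moreover have "{x. poly P x = 0} = {x. x ^ n = 1}"
    by (simp add: P_def poly_monom)
  ultimately show ?thesis
    using card_roots_eq_degree_if_simple[of P] assms(1) by fastforce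
qed

lemma dvd_if_roots_of_unity_power_eq_1:
  assumes "0 < n" and "of_nat n \<noteq> (0::'k)" and "\<And>x::'k. x ^ n = 1 \<Longrightarrow> x ^ i = 1"
  shows "n dvd i"
proof (rule ccontr)
  assume "\<not> n dvd i"
  then have r: "0 < i mod n" "i mod n < n"
    using assms(1) by (auto simp: mod_eq_0_iff_dvd[symmetric])
  define R :: "'k poly" where "R = monom 1 (i mod n) + [:-1:]"
  have "degree R = i mod n"
    using r(1) by (simp add: R_def degree_add_eq_left degree_monom_eq)
  then have "R \<noteq> 0"
    using r(1) by auto
  have "x ^ (i mod n) = 1" if "x ^ n = 1" for x :: 'k
    using assms(3)[OF that] that
    by (metis (no_types) div_mult_mod_eq power_add power_mult power_one mult_1 mult.commute)
  then have "{x::'k. x ^ n = 1} \<subseteq> {x. poly R x = 0}"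
    by (auto simp: R_def poly_monom)
  then have "card {x::'k. x ^ n = 1} \<le> card {x. poly R x = 0}"
    using \<open>R \<noteq> 0\<close> by (intro card_mono poly_roots_finite)
  also have "\<dots> \<le> i mod n"
    using card_poly_roots_bound[OF \<open>R \<noteq> 0\<close>] \<open>degree R = i mod n\<close> by simp
  finally show False
    using card_roots_of_unity[OF assms(1,2)] r(2) by simp
qed

lemma nth_root_exists:
  assumes "0 < n"
  shows "\<exists>y::'k. y ^ n = x"
proof -
  have "degree (monom 1 n + [:-x:] :: 'k poly) = n"
    using assms by (simp add: degree_add_eq_left degree_monom_eq)
  then obtain y where "poly (monom 1 n + [:-x:]) y = 0"
    using alg_closed assms by metis
  then show ?thesis
    by (auto simp: poly_monom)
qed

end

section \<open>The stabilizer of the coordinate triangle\<close>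

definition monomial_matrix :: "(3 \<Rightarrow> 3) \<Rightarrow> (3 \<Rightarrow> 'k) \<Rightarrow> 'k::field^3^3" where
  "monomial_matrix s c = (\<chi> r i. if r = s i then c i else 0)"

lemma inj_3_cases:
  assumes "inj (s :: 3 \<Rightarrow> 3)"
  shows "(s 1, s 2, s 3) \<in> {(1, 2, 3), (1, 3, 2), (2, 1, 3), (2, 3, 1), (3, 1, 2), (3, 2, 1)}"
proof -
  have "s 1 \<noteq> s 2" "s 1 \<noteq> s 3" "s 2 \<noteq> s 3"
    by (simp_all add: inj_eq[OF assms])
  then show ?thesis
    using exhaust_3[of "s 1"] exhaust_3[of "s 2"] exhaust_3[of "s 3"] by (elim disjE) simp_all
qed

lemma det_monomial_matrix_neq_0:
  assumes "inj s" and "\<And>i. c i \<noteq> 0"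
  shows "det (monomial_matrix s c) \<noteq> 0"
  using inj_3_cases[OF assms(1)] assms(2)[of 1] assms(2)[of 2] assms(2)[of 3]
  by (elim insertE emptyE) (simp_all add: det_3 monomial_matrix_def)

lemma matrix_vector_mult_axis_nth: "(M *v axis i 1) $ r = M $ r $ i"
  for M :: "'a::comm_ring_1^'n^'m"
  by (simp add: matrix_vector_mult_def axis_def mult.commute[of "M $ r $ _"]
      if_distrib[of "\<lambda>x. x * _"] cong: if_cong)

lemma monomial_matrix_mult_axis: "monomial_matrix s c *v axis i 1 = c i *s axis (s i) 1"
  by (simp add: vec_eq_iff matrix_vector_mult_axis_nth) (simp add: monomial_matrix_def axis_def)

lemma power_pred_eq_1_iff:
  fixes x :: "'k::field"
  assumes "0 < q" and "x \<noteq> 0"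
  shows "x ^ (q - 1) = 1 \<longleftrightarrow> x ^ q = x"
proof -
  have "q = Suc (q - 1)"
    using assms(1) by simp
  then have "x ^ q = x * x ^ (q - 1)"
    by (metis power_Suc)
  then show ?thesis
    using assms(2) by auto
qed

lemma monomial_matrix_in_Delta:
  assumes "2 \<le> q" and "inj s" and "\<And>i. c i ^ (q - 1) = 1"
  shows "monomial_matrix s c \<in> Delta q"
proof -
  have c0: "c i \<noteq> 0" for i
    using assms(1) assms(3)[of i] by (auto simp: power_0_left)
  have "c i ^ q = c i" for i
    using assms(1,3) c0 power_pred_eq_1_iff[of q "c i"] by simp
  then have "(monomial_matrix s c $ r $ i) ^ q = monomial_matrix s c $ r $ i" for r i
    using assms(1) by (simp add: monomial_matrix_def)
  moreover have "\<forall>i. \<exists>j e. e \<noteq> 0 \<and> monomial_matrix s c *v axis i 1 = e *s axis j 1"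
    using c0 monomial_matrix_mult_axis by blast
  ultimately show ?thesis
    using det_monomial_matrix_neq_0[OF assms(2) c0] by (simp add: Delta_def PGL3_def)
qed

lemma Delta_imp_monomial_matrix:
  assumes "M \<in> Delta q" and "2 \<le> q"
  obtains s c where "inj s" and "\<And>i. c i ^ (q - 1) = 1" and "M = monomial_matrix s c"
proof -
  from assms(1) have "\<forall>i. \<exists>j e. e \<noteq> 0 \<and> M *v axis i 1 = e *s axis j 1"
    by (simp add: Delta_def)
  then obtain s c where sc: "\<And>i. c i \<noteq> 0" "\<And>i. M *v axis i 1 = c i *s axis (s i) 1"
    by metis
  have "M $ r $ i = (if r = s i then c i else 0)" for r i
    using arg_cong[OF sc(2)[of i], of "\<lambda>v. v $ r"]
    unfolding matrix_vector_mult_axis_nth by (simp add: axis_def)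
  then have M: "M = monomial_matrix s c"
    by (simp add: vec_eq_iff monomial_matrix_def)
  have "inj s"
  proof (rule ccontr)
    assume "\<not> inj s"
    then obtain r where "r \<notin> range s"
      using finite_UNIV_surj_inj[of s] by auto
    then have "row r M = 0"
      by (auto simp: M row_def vec_eq_iff monomial_matrix_def)
    then show False
      using assms(1) det_zero_row(2)[of r M] by (simp add: Delta_def PGL3_def)
  qed
  moreover have "c i ^ (q - 1) = 1" for i
  proof -
    have "(M $ s i $ i) ^ q = M $ s i $ i"
      using assms(1) by (simp add: Delta_def PGL3_def)
    then have "c i ^ q = c i"
      by (simp add: M monomial_matrix_def)
    then show ?thesis
      using sc(1)[of i] assms(2) power_pred_eq_1_iff[of q "c i"] by simp
  qed
  ultimately show ?thesis
    using M that by blast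
qed

lemma lin_subst_monomial_matrix:
  assumes "inj s"
  shows "lin_subst (monomial_matrix s c) F = eval3 F
    (const3 (c (inv s 1)) * var3 (inv s 1))
    (const3 (c (inv s 2)) * var3 (inv s 2))
    (const3 (c (inv s 3)) * var3 (inv s 3))"
proof -
  have "bij s"
    using assms finite_UNIV_inj_surj[of s] by (simp add: bij_def)
  then have "(r = s j) = (j = inv s r)" for r j
    by (metis bij_inv_eq_iff)
  then have "(\<Sum>j\<in>UNIV. const3 (monomial_matrix s c $ r $ j) * var3 j)
      = const3 (c (inv s r)) * var3 (inv s r)" for r
    by (simp add: monomial_matrix_def if_distrib[of const3] if_distrib[of "\<lambda>x. x * _"] cong: if_cong)
  then show ?thesis
    by (simp add: lin_subst_def)
qed

lemma lin_subst_diagonal: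
  "lin_subst (monomial_matrix id c) F = eval3 F (const3 (c 1) * Xv) (const3 (c 2) * Yv) (const3 (c 3) * Zv)"
  by (simp add: lin_subst_def monomial_matrix_def sum_3 var3_def)

lemma lin_subst_swap_XY: "lin_subst (monomial_matrix (Transposition.transpose 1 2) (\<lambda>_. 1)) F = eval3 F Yv Xv Zv"
  by (simp add: lin_subst_def monomial_matrix_def sum_3 var3_def Transposition.transpose_def)

lemma lin_subst_swap_YZ: "lin_subst (monomial_matrix (Transposition.transpose 2 3) (\<lambda>_. 1)) F = eval3 F Xv Zv Yv"
  by (simp add: lin_subst_def monomial_matrix_def sum_3 var3_def Transposition.transpose_def)

lemma Delta_imp_scaled_permutation:
  fixes M :: "'k::field^3^3"
  assumes "M \<in> Delta q" and "2 \<le> q"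
  obtains \<tau> :: "3 \<Rightarrow> 3" and a b c :: 'k where "inj \<tau>" and "a ^ (q - 1) = 1" and "b ^ (q - 1) = 1" and "c ^ (q - 1) = 1"
    and "\<And>F. lin_subst M F = eval3 F (const3 a * var3 (\<tau> 1)) (const3 b * var3 (\<tau> 2)) (const3 c * var3 (\<tau> 3))"
proof -
  obtain s c where "inj s" and "\<And>i. c i ^ (q - 1) = 1" and "M = monomial_matrix s c"
    using Delta_imp_monomial_matrix[OF assms] by blast
  moreover have "inj (inv s)"
    using \<open>inj s\<close> finite_UNIV_inj_surj[of s] by (simp add: surj_imp_inj_inv)
  ultimately show ?thesis
    using that[of "inv s" "c (inv s 1)" "c (inv s 2)" "c (inv s 3)"] by (simp add: lin_subst_monomial_matrix)
qed

lemma invariant_if_fixed: "(\<And>M. M \<in> G \<Longrightarrow> lin_subst M F = F) \<Longrightarrow> invariant G F"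
  unfolding invariant_def by (metis const3_1 mult_1 one_neq_zero)

lemma invariant_const3_mult: "invariant G F \<Longrightarrow> invariant G (const3 c * F)"
  unfolding invariant_def by (metis lin_subst_const3 lin_subst_mult mult.left_commute)

lemma invariant_Delta_diagonal_coeff3:
  fixes a b c :: "'k::field" and F :: "'k pp3"
  assumes "invariant (Delta q) F" and "homog N F" and "2 \<le> q"
    and "a ^ (q - 1) = 1" and "b ^ (q - 1) = 1" and "c ^ (q - 1) = 1"
    and "coeff3 F i j k \<noteq> 0" and "coeff3 F i' j' k' \<noteq> 0"
  shows "a ^ i * b ^ j * c ^ k = a ^ i' * b ^ j' * c ^ k'"
proof -
  define d where "d r = (if r = 1 then a else if r = 2 then b else c)" for r :: 3
  have "monomial_matrix id d \<in> Delta q"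
    using assms(3-6) by (intro monomial_matrix_in_Delta) (auto simp: d_def)
  then obtain e where "lin_subst (monomial_matrix id d) F = const3 e * F"
    using assms(1) by (auto simp: invariant_def)
  then have "a ^ i * b ^ j * c ^ k * coeff3 F i j k = e * coeff3 F i j k" for i j k
    using coeff3_eval3_scale[OF assms(2), of a b c i j k] by (auto simp: lin_subst_diagonal d_def)
  from this[of i j k] this[of i' j' k'] assms(7,8) show ?thesis
    by simp
qed

lemma invariant_Delta_swap_XY_coeff3:
  assumes "invariant (Delta q) F" and "homog N F" and "2 \<le> q"
  obtains e where "\<And>i j k. coeff3 F j i k = e * coeff3 F i j k"
proof -
  have "monomial_matrix (Transposition.transpose 1 2) (\<lambda>_. 1) \<in> Delta q"
    using assms(3) by (intro monomial_matrix_in_Delta) auto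
  with assms(1) obtain e where "lin_subst (monomial_matrix (Transposition.transpose 1 2) (\<lambda>_. 1)) F = const3 e * F"
    unfolding invariant_def by blast
  then have "eval3 F Yv Xv Zv = const3 e * F"
    by (simp add: lin_subst_swap_XY)
  then show ?thesis
    using that coeff3_eval3_swap_XY[OF assms(2)] by (metis coeff3_const3_mult)
qed

lemma invariant_Delta_swap_YZ_coeff3:
  assumes "invariant (Delta q) F" and "homog N F" and "2 \<le> q"
  obtains e where "\<And>i j k. coeff3 F i k j = e * coeff3 F i j k"
proof -
  have "monomial_matrix (Transposition.transpose 2 3) (\<lambda>_. 1) \<in> Delta q"
    using assms(3) by (intro monomial_matrix_in_Delta) auto
  with assms(1) obtain e where "lin_subst (monomial_matrix (Transposition.transpose 2 3) (\<lambda>_. 1)) F = const3 e * F"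
    unfolding invariant_def by blast
  then have "eval3 F Xv Zv Yv = const3 e * F"
    by (simp add: lin_subst_swap_YZ)
  then show ?thesis
    using that coeff3_eval3_swap_YZ[OF assms(2)] by (metis coeff3_const3_mult)
qed

lemma transposition_eigenvalues_eq_1:
  fixes a b c e e' :: "'k::field"
  assumes "b = e * a" "a = e * b" "c = e * c" and "a = e' * a" "c = e' * b" "b = e' * c"
    and "a \<noteq> 0 \<or> b \<noteq> 0 \<or> c \<noteq> 0"
  shows "e = 1" and "e' = 1"
  using assms by (metis mult_cancel_right1 mult_zero_right)+

text \<open>The swaps of X, Y and of Y, Z scale F by some e and e'; a nonzero coefficient on one orbit
  (x', y', y'), (y', x', y'), (y', y', x') forces e = e' = 1.\<close>

lemma invariant_Delta_orbit_coeffs_eq: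
  assumes "invariant (Delta q) F" and "homog N F" and "2 \<le> q"
    and "coeff3 F x' y' y' \<noteq> 0 \<or> coeff3 F y' x' y' \<noteq> 0 \<or> coeff3 F y' y' x' \<noteq> 0"
  shows "coeff3 F y x y = coeff3 F x y y" and "coeff3 F y y x = coeff3 F x y y"
proof -
  obtain e e' where e: "\<And>i j k. coeff3 F j i k = e * coeff3 F i j k"
    and e': "\<And>i j k. coeff3 F i k j = e' * coeff3 F i j k"
    using invariant_Delta_swap_XY_coeff3[OF assms(1-3)] invariant_Delta_swap_YZ_coeff3[OF assms(1-3)]
    by metis
  have "e = 1" "e' = 1"
    using transposition_eigenvalues_eq_1[OF e e e e' e' e' assms(4)] by simp_all
  then show "coeff3 F y x y = coeff3 F x y y" and "coeff3 F y y x = coeff3 F x y y"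
    using e[of x y y] e'[of y x y] by simp_all
qed

section \<open>Symmetric sums of powers\<close>

definition power_sum3 :: "nat \<Rightarrow> 'k::comm_ring_1 pp3" where
  "power_sum3 n = Xv ^ n + Yv ^ n + Zv ^ n"

definition pair_sum3 :: "nat \<Rightarrow> 'k::comm_ring_1 pp3" where
  "pair_sum3 n = (Yv * Zv) ^ n + (Xv * Zv) ^ n + (Xv * Yv) ^ n"

lemma power_sum3_eq_monom3: "power_sum3 n = monom3 1 n 0 0 + monom3 1 0 n 0 + monom3 1 0 0 n"
  by (simp add: power_sum3_def monom3_def)

lemma pair_sum3_eq_monom3: "pair_sum3 n = monom3 1 0 n n + monom3 1 n 0 n + monom3 1 n n 0"
  by (simp add: pair_sum3_def monom3_def power_mult_distrib)

lemma coeff3_power_sum3: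
  "0 < n \<Longrightarrow> coeff3 (power_sum3 n) i j k = (if (i, j, k) \<in> {(n, 0, 0), (0, n, 0), (0, 0, n)} then 1 else 0)"
  by (auto simp: power_sum3_eq_monom3 coeff3_monom3)

lemma coeff3_pair_sum3:
  "0 < n \<Longrightarrow> coeff3 (pair_sum3 n) i j k = (if (i, j, k) \<in> {(0, n, n), (n, 0, n), (n, n, 0)} then 1 else 0)"
  by (auto simp: pair_sum3_eq_monom3 coeff3_monom3)

lemma homog_power_sum3:
  assumes "0 < n"
  shows "homog n (power_sum3 n :: 'k::comm_ring_1 pp3)"
  unfolding homog_iff_coeff3
proof
  have "coeff3 (power_sum3 n :: 'k pp3) n 0 0 = 1"
    using assms by (simp add: coeff3_power_sum3)
  then show "(power_sum3 n :: 'k pp3) \<noteq> 0"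
    by (metis coeff3_0 zero_neq_one)
  show "\<forall>i j k. coeff3 (power_sum3 n) i j k \<noteq> 0 \<longrightarrow> i + j + k = n"
    using assms by (auto simp: coeff3_power_sum3 split: if_splits)
qed

lemma homog_pair_sum3:
  assumes "0 < n"
  shows "homog (2 * n) (pair_sum3 n :: 'k::comm_ring_1 pp3)"
  unfolding homog_iff_coeff3
proof
  have "coeff3 (pair_sum3 n :: 'k pp3) n n 0 = 1"
    using assms by (simp add: coeff3_pair_sum3)
  then show "(pair_sum3 n :: 'k pp3) \<noteq> 0"
    by (metis coeff3_0 zero_neq_one)
  show "\<forall>i j k. coeff3 (pair_sum3 n) i j k \<noteq> 0 \<longrightarrow> i + j + k = 2 * n"
    using assms by (auto simp: coeff3_pair_sum3 split: if_splits)
qed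

lemma power_sum3_squared:
  "power_sum3 n ^ 2 = (power_sum3 (2 * n) + 2 * pair_sum3 n :: 'k::comm_ring_1 pp3)"
proof -
  have square: "(a + b + c) ^ 2 = a ^ 2 + b ^ 2 + c ^ 2 + 2 * (b * c + a * c + a * b)" for a b c :: "'k pp3"
    by (simp add: power2_eq_square algebra_simps)
  show ?thesis
    unfolding power_sum3_def pair_sum3_def square power_mult_distrib
    by (simp add: power_mult[symmetric] mult.commute[of n])
qed

lemma fermat_eq_power_sum3: "fermat q = power_sum3 (q - 1)"
  by (simp add: fermat_def power_sum3_def)

lemma fam_eq: "fam q t = const3 t * power_sum3 (q - 1) ^ 2 + pair_sum3 (q - 1)"
  by (simp add: fam_def fermat_eq_power_sum3 pair_sum3_def ac_simps)

lemma fam_eq_pair_sum3: "fam q 0 = pair_sum3 (q - 1)"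
  by (simp add: fam_eq)

lemma fam_eq_power_sum3_pair_sum3:
  "fam q t = const3 t * power_sum3 (2 * (q - 1)) + const3 (2 * t + 1) * pair_sum3 (q - 1)"
proof -
  have "const3 (2 * t + 1) = 2 * const3 t + 1"
    by (simp add: const3_add const3_mult const3_numeral)
  then show ?thesis
    by (simp add: fam_eq power_sum3_squared algebra_simps)
qed

lemma homog_fam:
  fixes t :: "'k::field"
  assumes "2 \<le> q"
  shows "homog (2 * (q - 1)) (fam q t)"
  unfolding homog_iff_coeff3
proof
  define n where "n = q - 1"
  have "0 < n"
    using assms by (simp add: n_def)
  have coeff_fam: "coeff3 (fam q t) i j k
      = t * coeff3 (power_sum3 (2 * n)) i j k + (2 * t + 1) * coeff3 (pair_sum3 n) i j k" for i j k
    by (simp add: fam_eq_power_sum3_pair_sum3 n_def)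
  have "coeff3 (fam q t) (2 * n) 0 0 = t" and "coeff3 (fam q t) n n 0 = 2 * t + 1"
    using \<open>0 < n\<close> by (simp_all add: coeff_fam coeff3_power_sum3 coeff3_pair_sum3)
  moreover have "t \<noteq> 0 \<or> 2 * t + 1 \<noteq> 0"
    by auto
  ultimately show "fam q t \<noteq> 0"
    by auto
  show "\<forall>i j k. coeff3 (fam q t) i j k \<noteq> 0 \<longrightarrow> i + j + k = 2 * (q - 1)"
  proof (intro allI impI)
    fix i j k
    assume "coeff3 (fam q t) i j k \<noteq> 0"
    then have "coeff3 (power_sum3 (2 * n)) i j k \<noteq> (0::'k) \<or> coeff3 (pair_sum3 n) i j k \<noteq> (0::'k)"
      unfolding coeff_fam by auto
    then show "i + j + k = 2 * (q - 1)"
      using homog_power_sum3[of "2 * n", where 'k = 'k] homog_pair_sum3[of n, where 'k = 'k] \<open>0 < n\<close>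
      by (auto simp: homog_iff_coeff3 n_def)
  qed
qed

lemma power_sum3_permute:
  fixes \<tau> :: "3 \<Rightarrow> 3"
  shows "inj \<tau> \<Longrightarrow> var3 (\<tau> 1) ^ n + var3 (\<tau> 2) ^ n + var3 (\<tau> 3) ^ n = power_sum3 n"
  using inj_3_cases[of \<tau>] by (auto simp: power_sum3_def var3_def ac_simps)

lemma pair_sum3_permute:
  fixes \<tau> :: "3 \<Rightarrow> 3"
  shows "inj \<tau> \<Longrightarrow> (var3 (\<tau> 2) * var3 (\<tau> 3)) ^ n + (var3 (\<tau> 1) * var3 (\<tau> 3)) ^ n
    + (var3 (\<tau> 1) * var3 (\<tau> 2)) ^ n = pair_sum3 n"
  using inj_3_cases[of \<tau>] by (auto simp: pair_sum3_def var3_def ac_simps)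

lemma lin_subst_Delta_power_sum3:
  assumes "M \<in> Delta q" and "2 \<le> q"
  shows "lin_subst M (power_sum3 (q - 1)) = power_sum3 (q - 1)"
proof -
  obtain \<tau> :: "3 \<Rightarrow> 3" and a b c where "inj \<tau>" and "a ^ (q - 1) = 1" "b ^ (q - 1) = 1" "c ^ (q - 1) = 1"
    and "\<And>F. lin_subst M F = eval3 F (const3 a * var3 (\<tau> 1)) (const3 b * var3 (\<tau> 2)) (const3 c * var3 (\<tau> 3))"
    using Delta_imp_scaled_permutation[OF assms] by blast
  then show ?thesis
    by (simp add: power_sum3_def power_mult_distrib const3_power[symmetric]
        power_sum3_permute[unfolded power_sum3_def])
qed

lemma lin_subst_Delta_pair_sum3:
  assumes "M \<in> Delta q" and "2 \<le> q"
  shows "lin_subst M (pair_sum3 (q - 1)) = pair_sum3 (q - 1)"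
proof -
  obtain \<tau> :: "3 \<Rightarrow> 3" and a b c where "inj \<tau>" and "a ^ (q - 1) = 1" "b ^ (q - 1) = 1" "c ^ (q - 1) = 1"
    and "\<And>F. lin_subst M F = eval3 F (const3 a * var3 (\<tau> 1)) (const3 b * var3 (\<tau> 2)) (const3 c * var3 (\<tau> 3))"
    using Delta_imp_scaled_permutation[OF assms] by blast
  then show ?thesis
    by (simp add: pair_sum3_def power_mult_distrib const3_power[symmetric]
        pair_sum3_permute[unfolded pair_sum3_def power_mult_distrib])
qed

lemma invariant_Delta_fermat:
  assumes "2 \<le> q"
  shows "invariant (Delta q) (fermat q)"
proof (rule invariant_if_fixed)
  fix M
  assume "M \<in> Delta q"
  then show "lin_subst M (fermat q) = fermat q"
    unfolding fermat_eq_power_sum3 by (rule lin_subst_Delta_power_sum3[OF _ assms])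
qed

lemma invariant_Delta_fam:
  fixes t :: "'k::field"
  assumes "2 \<le> q"
  shows "invariant (Delta q) (fam q t)"
proof (rule invariant_if_fixed)
  fix M :: "'k^3^3"
  assume "M \<in> Delta q"
  then show "lin_subst M (fam q t) = fam q t"
    unfolding fam_eq
    by (simp only: lin_subst_add lin_subst_mult lin_subst_power lin_subst_const3
        lin_subst_Delta_power_sum3[OF _ assms] lin_subst_Delta_pair_sum3[OF _ assms])
qed

section \<open>Eisenstein's criterion\<close>

lemma Eisenstein_degree_eq_0:
  fixes f g h :: "'a::idom poly"
  assumes "prime_elem p" and "f = g * h" and "\<not> p dvd lead_coeff f"
    and "\<And>i. i < degree f \<Longrightarrow> p dvd coeff f i"
    and "p dvd coeff g 0" and "\<not> p dvd coeff h 0"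
  shows "degree h = 0"
proof (rule ccontr)
  assume "degree h \<noteq> 0"
  have "f \<noteq> 0"
    using assms(3) by auto
  then have "g \<noteq> 0" "h \<noteq> 0"
    using assms(2) by auto
  then have "degree f = degree g + degree h"
    using assms(2) by (simp add: degree_mult_eq)
  have g_coeffs: "p dvd coeff g i" if "i < degree f" for i
    using that
  proof (induction i rule: less_induct)
    case (less i)
    show ?case
    proof (cases i)
      case 0
      then show ?thesis using assms(5) by simp
    next
      case (Suc i')
      have "coeff f i = (\<Sum>l<i. coeff g l * coeff h (i - l)) + coeff g i * coeff h 0"
        by (simp add: assms(2) coeff_mult Suc lessThan_Suc_atMost[symmetric])
      moreover have "p dvd (\<Sum>l<i. coeff g l * coeff h (i - l))"
        using less by (intro dvd_sum) auto
      ultimately have "p dvd coeff g i * coeff h 0"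
        using assms(4) less.prems by (metis dvd_add_right_iff)
      then show ?thesis
        using assms(1,6) by (simp add: prime_elem_dvd_mult_iff)
    qed
  qed
  have "p dvd lead_coeff g"
    using g_coeffs \<open>degree f = degree g + degree h\<close> \<open>degree h \<noteq> 0\<close> by simp
  then show False
    using assms(2,3) by (simp add: lead_coeff_mult)
qed

lemma Eisenstein_criterion:
  fixes f g h :: "'a::idom poly"
  assumes "prime_elem p" and "f = g * h" and "\<not> p dvd lead_coeff f"
    and "\<And>i. i < degree f \<Longrightarrow> p dvd coeff f i" and "\<not> p ^ 2 dvd coeff f 0"
  shows "degree g = 0 \<or> degree h = 0"
proof -
  have f0: "coeff f 0 = coeff g 0 * coeff h 0"
    using assms(2) by (simp add: coeff_mult_0)
  show ?thesis
  proof (cases "degree f = 0")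
    case True
    then show ?thesis
      using assms(2,3) by (metis add_is_0 degree_mult_eq mult_eq_0_iff leading_coeff_0_iff)
  next
    case False
    then have "p dvd coeff g 0 * coeff h 0"
      using assms(4) f0 by (metis neq0_conv)
    then consider "p dvd coeff g 0" "\<not> p dvd coeff h 0" | "p dvd coeff h 0" "\<not> p dvd coeff g 0"
      using assms(1,5) f0 by (metis mult_dvd_mono power2_eq_square prime_elem_dvd_mult_iff)
    then show ?thesis
    proof cases
      case 1
      have "degree h = 0"
        by (rule Eisenstein_degree_eq_0[of p f g h]) (use assms 1 in auto)
      then show ?thesis ..
    next
      case 2
      have "degree g = 0"
        by (rule Eisenstein_degree_eq_0[of p f h g]) (use assms 2 in \<open>auto simp: mult.commute\<close>)
      then show ?thesis ..
    qed
  qed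
qed

lemma binomial_degree_coeffs:
  fixes a b :: "'a::comm_ring_1"
  assumes "0 < n" and "a \<noteq> 0"
  shows "degree (monom a n + [:b:]) = n" and "lead_coeff (monom a n + [:b:]) = a"
    and "coeff (monom a n + [:b:]) 0 = b" and "0 < i \<Longrightarrow> i < n \<Longrightarrow> coeff (monom a n + [:b:]) i = 0"
proof -
  show degree: "degree (monom a n + [:b:]) = n"
    using assms by (simp add: degree_add_eq_left degree_monom_eq)
  show "lead_coeff (monom a n + [:b:]) = a"
    unfolding degree using assms(1) by (simp add: coeff_pCons split: nat.split)
  show "coeff (monom a n + [:b:]) 0 = b"
    using assms(1) by simp
  show "0 < i \<Longrightarrow> i < n \<Longrightarrow> coeff (monom a n + [:b:]) i = 0"
    by (simp add: coeff_pCons split: nat.split)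
qed

lemma binomial_Eisenstein:
  fixes a b :: "'a::idom"
  assumes "prime_elem p" and "0 < n" and "\<not> p dvd a" and "p dvd b" and "\<not> p ^ 2 dvd b"
    and "monom a n + [:b:] = g * h"
  shows "degree g = 0 \<or> degree h = 0"
proof -
  have "a \<noteq> 0"
    using assms(3) by auto
  note binomial = binomial_degree_coeffs[OF assms(2) this, where b = b]
  show ?thesis
  proof (rule Eisenstein_criterion[OF assms(1) assms(6)])
    show "p dvd coeff (monom a n + [:b:]) i" if "i < degree (monom a n + [:b:])" for i
      using that assms(4) binomial by (cases "i = 0") auto
  qed (use assms(3,5) binomial in auto)
qed

lemma reflect_binomial:
  fixes a b :: "'a::comm_ring_1"
  assumes "0 < n" and "a \<noteq> 0"
  shows "reflect_poly (monom a n + [:b:]) = monom b n + [:a:]"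
proof (rule poly_eqI)
  fix i
  show "coeff (reflect_poly (monom a n + [:b:])) i = coeff (monom b n + [:a:]) i"
    using assms binomial_degree_coeffs[OF assms, where b = b]
    by (cases "i = 0"; cases "i = n") (auto simp: coeff_reflect_poly coeff_monom coeff_pCons split: nat.split)
qed

lemma binomial_Eisenstein_reflected:
  fixes a b :: "'a::idom"
  assumes "prime_elem p" and "0 < n" and "p dvd a" and "\<not> p ^ 2 dvd a" and "\<not> p dvd b"
    and "monom a n + [:b:] = g * h"
  shows "degree g = 0 \<or> degree h = 0"
proof -
  have "a \<noteq> 0" "b \<noteq> 0"
    using assms(4,5) by auto
  have "b = coeff g 0 * coeff h 0"
    using arg_cong[OF assms(6), of "\<lambda>f. coeff f 0"] assms(2) by (simp add: coeff_mult_0)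
  then have "coeff g 0 \<noteq> 0" "coeff h 0 \<noteq> 0"
    using \<open>b \<noteq> 0\<close> by auto
  have "monom b n + [:a:] = reflect_poly g * reflect_poly h"
    using assms(6) reflect_binomial[OF assms(2) \<open>a \<noteq> 0\<close>, where b = b] by (metis reflect_poly_mult)
  then have "degree (reflect_poly g) = 0 \<or> degree (reflect_poly h) = 0"
    by (rule binomial_Eisenstein[OF assms(1,2,5,3,4)])
  then show ?thesis
    using \<open>coeff g 0 \<noteq> 0\<close> \<open>coeff h 0 \<noteq> 0\<close> by simp
qed

lemma irreducible_binomial:
  fixes a b :: "'a::idom"
  assumes "0 < n" and "a \<noteq> 0" and "\<And>d. d dvd a \<Longrightarrow> d dvd b \<Longrightarrow> d dvd 1"
    and "\<And>g h. monom a n + [:b:] = g * h \<Longrightarrow> degree g = 0 \<or> degree h = 0"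
  shows "irreducible (monom a n + [:b:])"
proof (rule irreducibleI)
  note binomial = binomial_degree_coeffs[OF assms(1,2), where b = b]
  show "monom a n + [:b:] \<noteq> 0"
    using binomial(2) assms(2) leading_coeff_0_iff by metis
  show "\<not> monom a n + [:b:] dvd 1"
    using binomial(1) assms(1) dvd_imp_degree_le[of "monom a n + [:b:]" 1] by auto
  have const_factor_is_unit: "d dvd 1" if "monom a n + [:b:] = [:d:] * k" for d k
  proof (rule assms(3))
    have "coeff (monom a n + [:b:]) n = d * coeff k n" and "coeff (monom a n + [:b:]) 0 = d * coeff k 0"
      unfolding that by simp_all
    then show "d dvd a" and "d dvd b"
      using binomial(1-3) by auto
  qed
  fix g h
  assume gh: "monom a n + [:b:] = g * h"
  from assms(4)[OF this] show "g dvd 1 \<or> h dvd 1"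
    using const_factor_is_unit gh
    by (auto elim!: degree_eq_zeroE simp: is_unit_const_poly_iff mult.commute)
qed

section \<open>Irreducibility of the Fermat curve\<close>

definition Xv2 :: "'k::comm_ring_1 poly poly" where "Xv2 = [:monom 1 1:]"

definition Yv2 :: "'k::comm_ring_1 poly poly" where "Yv2 = monom 1 1"

lemma power_sum3_eq_binomial: "power_sum3 n = monom 1 n + [:Xv2 ^ n + Yv2 ^ n:]"
  by (simp add: power_sum3_def Xv_def Yv_def Zv_def Xv2_def Yv2_def poly_const_pow monom_power)

lemma pair_sum3_eq_binomial: "pair_sum3 n = monom (Xv2 ^ n + Yv2 ^ n) n + [:Xv2 ^ n * Yv2 ^ n:]"
  by (simp add: pair_sum3_def Xv_def Yv_def Zv_def Xv2_def Yv2_def poly_const_pow monom_power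
      power_mult_distrib smult_monom algebra_simps flip: add_monom)

lemma prime_elem_monic_linear: "prime_elem [:-r, 1:]"
  for r :: "'a::idom"
proof (rule prime_elemI)
  show "[:-r, 1:] \<noteq> 0" and "\<not> [:-r, 1:] dvd 1"
    using dvd_imp_degree_le[of "[:-r, 1:]" 1] by auto
  show "[:-r, 1:] dvd a \<or> [:-r, 1:] dvd b" if "[:-r, 1:] dvd a * b" for a b
    using that by (simp flip: poly_eq_0_iff_dvd)
qed

lemma poly_pderiv_eq_0_if_square_dvd:
  fixes f :: "'a::idom poly"
  assumes "[:-r, 1:] ^ 2 dvd f"
  shows "poly (pderiv f) r = 0"
proof -
  from assms obtain g where "f = [:-r, 1:] ^ 2 * g" ..
  then have f: "f = [:-r, 1:] * ([:-r, 1:] * g)"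
    by (simp only: power2_eq_square mult.assoc)
  show ?thesis
    unfolding f pderiv_mult by (simp add: pderiv_pCons)
qed

context
  fixes n :: nat and z :: "'k::field"
  assumes n: "0 < n" and char: "of_nat n \<noteq> (0::'k)" and z: "z ^ n = -1"
begin

private definition "Y_minus_zX = [:- [:0, z:], 1:]"

private lemma prime_elem_Y_minus_zX: "prime_elem Y_minus_zX"
  unfolding Y_minus_zX_def by (rule prime_elem_monic_linear)

private lemma poly_var_powers_at_zX:
  "poly Xv2 [:0, z:] ^ n = monom 1 n" "poly Yv2 [:0, z:] ^ n = monom (- 1) n"
proof -
  have "[:0, z:] = smult z (monom 1 1)"
    by (simp add: monom_Suc)
  then show "poly Xv2 [:0, z:] ^ n = monom 1 n" "poly Yv2 [:0, z:] ^ n = monom (- 1) n"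
    by (simp_all add: Xv2_def Yv2_def poly_monom smult_power z monom_power smult_monom)
qed

private lemma Y_minus_zX_dvd_sum: "Y_minus_zX dvd Xv2 ^ n + Yv2 ^ n"
  unfolding Y_minus_zX_def poly_eq_0_iff_dvd[symmetric] by (simp add: poly_var_powers_at_zX add_monom)

private lemma Y_minus_zX_not_dvd_product: "\<not> Y_minus_zX dvd Xv2 ^ n * Yv2 ^ n"
  unfolding Y_minus_zX_def poly_eq_0_iff_dvd[symmetric] by (simp add: poly_var_powers_at_zX)

private lemma Y_minus_zX_square_not_dvd_sum: "\<not> Y_minus_zX ^ 2 dvd Xv2 ^ n + Yv2 ^ n"
proof
  assume "Y_minus_zX ^ 2 dvd Xv2 ^ n + Yv2 ^ n"
  then have "poly (pderiv (Xv2 ^ n + Yv2 ^ n)) [:0, z:] = 0"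
    unfolding Y_minus_zX_def by (rule poly_pderiv_eq_0_if_square_dvd)
  moreover have "pderiv (Xv2 ^ n + Yv2 ^ n :: 'k poly poly) = monom (of_nat n) (n - 1)"
    by (simp add: Xv2_def Yv2_def poly_const_pow monom_power pderiv_add pderiv_pCons pderiv_monom)
  moreover have "z \<noteq> 0"
    using z n by (auto simp: power_0_left)
  ultimately show False
    using char by (simp add: poly_monom of_nat_poly)
qed

lemma irreducible_power_sum3: "irreducible (power_sum3 n :: 'k pp3)"
  unfolding power_sum3_eq_binomial
proof (rule irreducible_binomial[OF n])
  fix g h :: "'k pp3"
  assume "monom 1 n + [:Xv2 ^ n + Yv2 ^ n:] = g * h"
  then show "degree g = 0 \<or> degree h = 0"
    by (rule binomial_Eisenstein[OF prime_elem_Y_minus_zX n prime_elem_not_unit[OF prime_elem_Y_minus_zX]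
        Y_minus_zX_dvd_sum Y_minus_zX_square_not_dvd_sum])
qed simp_all

lemma irreducible_pair_sum3: "irreducible (pair_sum3 n :: 'k pp3)"
  unfolding pair_sum3_eq_binomial
proof (rule irreducible_binomial[OF n])
  show "Xv2 ^ n + Yv2 ^ n \<noteq> (0 :: 'k poly poly)"
    using Y_minus_zX_square_not_dvd_sum by auto
  fix g h :: "'k pp3"
  assume "monom (Xv2 ^ n + Yv2 ^ n) n + [:Xv2 ^ n * Yv2 ^ n:] = g * h"
  then show "degree g = 0 \<or> degree h = 0"
    by (rule binomial_Eisenstein_reflected[OF prime_elem_Y_minus_zX n Y_minus_zX_dvd_sum Y_minus_zX_square_not_dvd_sum
        Y_minus_zX_not_dvd_product])
next
  fix d :: "'k poly poly"
  assume "d dvd Xv2 ^ n + Yv2 ^ n" and "d dvd Xv2 ^ n * Yv2 ^ n"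
  then have "d dvd Xv2 ^ n * (Xv2 ^ n + Yv2 ^ n) - Xv2 ^ n * Yv2 ^ n"
    and "d dvd Yv2 ^ n * (Xv2 ^ n + Yv2 ^ n) - Xv2 ^ n * Yv2 ^ n"
    by simp_all
  then have "d dvd [:monom 1 (n + n):]" and "d dvd monom 1 (n + n)"
    by (simp_all add: algebra_simps Xv2_def Yv2_def poly_const_pow monom_power mult_monom)
  from this(1) have "degree d = 0"
    using dvd_imp_degree_le[of d] by fastforce
  then obtain c where "d = [:c:]"
    by (rule degree_eq_zeroE)
  with \<open>d dvd monom 1 (n + n)\<close> have "c dvd 1"
    by (simp add: const_poly_dvd_iff coeff_monom) (metis (full_types))
  then show "d dvd 1"
    by (simp add: \<open>d = [:c:]\<close> is_unit_const_poly_iff)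
qed

end

section \<open>Invariant curves of degree q - 1 and 2(q - 1)\<close>

lemma exponents_of_degree_1:
  fixes n i j k :: nat
  assumes "0 < n" and "n dvd i" "n dvd j" "n dvd k" and "i + j + k = n"
  shows "(i, j, k) \<in> {(n, 0, 0), (0, n, 0), (0, 0, n)}"
proof -
  obtain a b c where "i = n * a" "j = n * b" "k = n * c"
    using assms(2-4) by (auto elim!: dvdE)
  moreover from this have "a + b + c = 1"
    using assms(1,5) by (metis add_mult_distrib2 mult_cancel1 mult.right_neutral neq0_conv)
  ultimately show ?thesis
    by (auto simp: add_is_1)
qed

lemma exponents_of_degree_2:
  fixes n i j k :: nat
  assumes "0 < n" and "n dvd i" "n dvd j" "n dvd k" and "i + j + k = 2 * n"
  shows "(i, j, k) \<in> {(2 * n, 0, 0), (0, 2 * n, 0), (0, 0, 2 * n), (0, n, n), (n, 0, n), (n, n, 0)}"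
proof -
  obtain a b c where abc: "i = n * a" "j = n * b" "k = n * c"
    using assms(2-4) by (auto elim!: dvdE)
  moreover from this have "a + b + c = 2"
    using assms(1,5) by (metis add_mult_distrib2 mult_cancel1 mult.commute neq0_conv)
  then have "a = 2 \<and> b = 0 \<and> c = 0 \<or> a = 0 \<and> b = 2 \<and> c = 0 \<or> a = 0 \<and> b = 0 \<and> c = 2
      \<or> a = 0 \<and> b = 1 \<and> c = 1 \<or> a = 1 \<and> b = 0 \<and> c = 1 \<or> a = 1 \<and> b = 1 \<and> c = 0"
    by presburger
  ultimately show ?thesis
    by auto
qed

context
  fixes q :: nat
  assumes alg_closed: "\<And>P::'k::field poly. degree P > 0 \<Longrightarrow> \<exists>x. poly P x = 0"
    and q: "3 \<le> q" and char: "of_nat q = (0::'k)"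
begin

lemma of_nat_q_minus_1_neq_0: "of_nat (q - 1) \<noteq> (0::'k)"
proof -
  have "of_nat (q - 1) + 1 = (0::'k)"
    using char q by (metis Suc_diff_1 of_nat_Suc add.commute less_le_trans zero_less_numeral)
  then show ?thesis
    by auto
qed

lemma invariant_irreducible_exponents_dvd:
  fixes F :: "'k pp3"
  assumes "inv_irr_curve (Delta q) N F" and "2 \<le> N" and "coeff3 F i j k \<noteq> 0"
  shows "(q - 1) dvd i" and "(q - 1) dvd j" and "(q - 1) dvd k"
proof -
  have hom: "homog N F" and irr: "irreducible F" and inv: "invariant (Delta q) F"
    using assms(1) by (auto simp: inv_irr_curve_def)
  have "0 < q - 1" "2 \<le> q"
    using q by auto
  note roots = dvd_if_roots_of_unity_power_eq_1[OF alg_closed this(1) of_nat_q_minus_1_neq_0]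
  note diag = invariant_Delta_diagonal_coeff3[OF inv hom \<open>2 \<le> q\<close> _ _ _ assms(3)]
  obtain j0 k0 i1 k1 i2 j2 where
    "coeff3 F 0 j0 k0 \<noteq> 0" "coeff3 F i1 0 k1 \<noteq> 0" "coeff3 F i2 j2 0 \<noteq> 0"
    using irreducible_homog_exponent_zero[OF irr hom assms(2)] by blast
  show "(q - 1) dvd i"
  proof (rule roots)
    fix x :: 'k
    assume "x ^ (q - 1) = 1"
    from diag[OF this power_one power_one \<open>coeff3 F 0 j0 k0 \<noteq> 0\<close>] show "x ^ i = 1"
      by simp
  qed
  show "(q - 1) dvd j"
  proof (rule roots)
    fix x :: 'k
    assume "x ^ (q - 1) = 1"
    from diag[OF power_one this power_one \<open>coeff3 F i1 0 k1 \<noteq> 0\<close>] show "x ^ j = 1"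
      by simp
  qed
  show "(q - 1) dvd k"
  proof (rule roots)
    fix x :: 'k
    assume "x ^ (q - 1) = 1"
    from diag[OF power_one power_one this \<open>coeff3 F i2 j2 0 \<noteq> 0\<close>] show "x ^ k = 1"
      by simp
  qed
qed

lemma invariant_irreducible_degree_dvd:
  fixes F :: "'k pp3"
  assumes "inv_irr_curve (Delta q) N F" and "2 \<le> N"
  shows "(q - 1) dvd N"
proof -
  have "homog N F"
    using assms(1) by (simp add: inv_irr_curve_def)
  then obtain i j k where "coeff3 F i j k \<noteq> 0" and "i + j + k = N"
    by (auto simp: homog_iff_coeff3 pp3_eq_iff)
  with invariant_irreducible_exponents_dvd[OF assms] show ?thesis
    by (metis dvd_add)
qed

lemma invariant_curve_degree_q_minus_1:
  fixes F :: "'k pp3"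
  assumes "inv_irr_curve (Delta q) (q - 1) F"
  shows "\<exists>c. c \<noteq> 0 \<and> F = const3 c * fermat q"
proof -
  define n where "n = q - 1"
  have "0 < n" "2 \<le> n" "2 \<le> q"
    using q by (auto simp: n_def)
  have hom: "homog n F" and inv: "invariant (Delta q) F"
    using assms by (auto simp: inv_irr_curve_def n_def)
  define a b c where "a = coeff3 F n 0 0" and "b = coeff3 F 0 n 0" and "c = coeff3 F 0 0 n"
  have support: "(i, j, k) \<in> {(n, 0, 0), (0, n, 0), (0, 0, n)}" if "coeff3 F i j k \<noteq> 0" for i j k
  proof (rule exponents_of_degree_1[OF \<open>0 < n\<close>])
    show "n dvd i" "n dvd j" "n dvd k"
      using invariant_irreducible_exponents_dvd[OF assms _ that] \<open>2 \<le> n\<close> by (simp_all add: n_def)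
    show "i + j + k = n"
      using hom that by (simp add: homog_iff_coeff3)
  qed
  from pp3_eq_sum_support[of "{(n, 0, 0), (0, n, 0), (0, 0, n)}" F, OF _ support]
  have F: "F = monom3 a n 0 0 + (monom3 b 0 n 0 + monom3 c 0 0 n)"
    using \<open>0 < n\<close> by (simp add: a_def b_def c_def)
  have "a \<noteq> 0 \<or> b \<noteq> 0 \<or> c \<noteq> 0"
    using hom F by (auto simp: homog_iff_coeff3)
  then have "b = a" "c = a"
    using invariant_Delta_orbit_coeffs_eq[OF inv hom \<open>2 \<le> q\<close>, where x' = n and y' = 0 and x = n and y = 0]
    by (simp_all add: a_def b_def c_def)
  then have "F = const3 a * fermat q"
    by (simp add: F fermat_eq_power_sum3 power_sum3_eq_monom3 distrib_left n_def monom3_def mult.assoc)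
  moreover have "a \<noteq> 0"
    using \<open>a \<noteq> 0 \<or> b \<noteq> 0 \<or> c \<noteq> 0\<close> \<open>b = a\<close> \<open>c = a\<close> by simp
  ultimately show ?thesis
    by blast
qed

lemma invariant_curve_degree_2q_minus_2_symmetric:
  fixes F :: "'k pp3"
  assumes "inv_irr_curve (Delta q) (2 * (q - 1)) F"
  obtains a b where "F = const3 a * power_sum3 (2 * (q - 1)) + const3 b * pair_sum3 (q - 1)"
proof -
  define n where "n = q - 1"
  have "0 < n" "2 \<le> n" "2 \<le> q"
    using q by (auto simp: n_def)
  have hom: "homog (2 * n) F" and inv: "invariant (Delta q) F"
    using assms by (auto simp: inv_irr_curve_def n_def)
  define S where "S = {(2 * n, 0, 0), (0, 2 * n, 0), (0, 0, 2 * n), (0, n, n), (n, 0, n), (n, n, 0)}"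
  have support: "(i, j, k) \<in> S" if "coeff3 F i j k \<noteq> 0" for i j k
    unfolding S_def
  proof (rule exponents_of_degree_2[OF \<open>0 < n\<close>])
    show "n dvd i" "n dvd j" "n dvd k"
      using invariant_irreducible_exponents_dvd[OF assms _ that] \<open>2 \<le> n\<close> by (simp_all add: n_def)
    show "i + j + k = 2 * n"
      using hom that by (simp add: homog_iff_coeff3)
  qed
  define a b where "a = coeff3 F (2 * n) 0 0" and "b = coeff3 F 0 n n"
  obtain i j k where "coeff3 F i j k \<noteq> 0"
    using hom by (auto simp: homog_iff_coeff3 pp3_eq_iff)
  with support[OF this] have "coeff3 F (2 * n) 0 0 \<noteq> 0 \<or> coeff3 F 0 (2 * n) 0 \<noteq> 0 \<or> coeff3 F 0 0 (2 * n) \<noteq> 0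
      \<or> coeff3 F 0 n n \<noteq> 0 \<or> coeff3 F n 0 n \<noteq> 0 \<or> coeff3 F n n 0 \<noteq> 0"
    by (auto simp: S_def)
  moreover have "coeff3 F 0 (2 * n) 0 = a \<and> coeff3 F 0 0 (2 * n) = a \<and> coeff3 F n 0 n = b \<and> coeff3 F n n 0 = b"
    if "coeff3 F x' y' y' \<noteq> 0 \<or> coeff3 F y' x' y' \<noteq> 0 \<or> coeff3 F y' y' x' \<noteq> 0" for x' y'
    using invariant_Delta_orbit_coeffs_eq[OF inv hom \<open>2 \<le> q\<close> that, where x = "2 * n" and y = 0]
      invariant_Delta_orbit_coeffs_eq[OF inv hom \<open>2 \<le> q\<close> that, where x = 0 and y = n]
    by (simp add: a_def b_def)
  ultimately have orbits: "coeff3 F 0 (2 * n) 0 = a" "coeff3 F 0 0 (2 * n) = a" "coeff3 F n 0 n = b" "coeff3 F n n 0 = b"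
    by blast+
  have "F = monom3 a (2 * n) 0 0 + (monom3 a 0 (2 * n) 0 + (monom3 a 0 0 (2 * n)
      + (monom3 b 0 n n + (monom3 b n 0 n + monom3 b n n 0))))"
    using pp3_eq_sum_support[of S F, OF _ support] \<open>0 < n\<close> by (simp add: S_def orbits flip: a_def b_def)
  also have "\<dots> = const3 a * power_sum3 (2 * n) + const3 b * pair_sum3 n"
    by (simp add: power_sum3_eq_monom3 pair_sum3_eq_monom3 distrib_left monom3_def mult.assoc)
  finally show ?thesis
    using that by (simp add: n_def)
qed

lemma invariant_curve_degree_2q_minus_2:
  fixes F :: "'k pp3"
  assumes "inv_irr_curve (Delta q) (2 * (q - 1)) F"
  shows "\<exists>c t. c \<noteq> 0 \<and> F = const3 c * fam q t"
proof -
  define n where "n = q - 1"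
  have "0 < n"
    using q by (simp add: n_def)
  obtain a b where F: "F = const3 a * power_sum3 (2 * n) + const3 b * pair_sum3 n"
    using invariant_curve_degree_2q_minus_2_symmetric[OF assms] unfolding n_def .
  show ?thesis
  proof (cases "b = 2 * a")
    case True
    then have "F = const3 a * (power_sum3 (2 * n) + 2 * pair_sum3 n)"
      by (simp add: F distrib_left const3_mult const3_numeral mult.left_commute)
    then have "F = (const3 a * power_sum3 n) * power_sum3 n"
      by (simp add: power_sum3_squared[symmetric] power2_eq_square mult.assoc)
    moreover have "a \<noteq> 0"
      using assms True by (auto simp: F inv_irr_curve_def)
    ultimately show ?thesis
      using assms irreducibleD homog_not_unit homog_power_sum3[OF \<open>0 < n\<close>]
        homog_const3_mult[OF \<open>a \<noteq> 0\<close> homog_power_sum3[OF \<open>0 < n\<close>]] \<open>0 < n\<close>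
      unfolding inv_irr_curve_def by blast
  next
    case False
    define c where "c = b - 2 * a"
    have "c \<noteq> 0"
      using False by (simp add: c_def)
    then have "c * (a / c) = a" and "c * (2 * (a / c) + 1) = b"
      by (simp_all add: c_def distrib_left)
    then have "const3 c * fam q (a / c) = F"
      by (simp add: F fam_eq_power_sum3_pair_sum3 distrib_left mult.assoc[symmetric]
          n_def flip: const3_mult)
    with \<open>c \<noteq> 0\<close> show ?thesis
      by metis
  qed
qed

lemma root_of_minus_1_exists: "\<exists>z::'k. z ^ (q - 1) = -1"
  by (rule nth_root_exists) (use alg_closed q in auto)

lemma inv_irr_curve_fermat: "inv_irr_curve (Delta q) (q - 1) (fermat q :: 'k pp3)"
proof -
  have "0 < q - 1" "2 \<le> q"
    using q by auto
  moreover obtain z :: 'k where "z ^ (q - 1) = -1"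
    using root_of_minus_1_exists ..
  ultimately show ?thesis
    using homog_power_sum3 irreducible_power_sum3[OF _ of_nat_q_minus_1_neq_0] invariant_Delta_fermat
    unfolding inv_irr_curve_def fermat_eq_power_sum3 by metis
qed

lemma inv_irr_curve_fam_0: "inv_irr_curve (Delta q) (2 * (q - 1)) (fam q 0 :: 'k pp3)"
proof -
  have "0 < q - 1" "2 \<le> q"
    using q by auto
  moreover obtain z :: 'k where "z ^ (q - 1) = -1"
    using root_of_minus_1_exists ..
  ultimately show ?thesis
    using homog_fam[of q 0] irreducible_pair_sum3[OF _ of_nat_q_minus_1_neq_0] invariant_Delta_fam[of q 0]
    unfolding inv_irr_curve_def fam_eq_pair_sum3 by metis
qed

lemma dG_Delta: "dG (Delta q :: ('k^3^3) set) = q - 1"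
  unfolding dG_def
proof (rule Least_equality)
  show "2 \<le> q - 1 \<and> (\<exists>F::'k pp3. inv_irr_curve (Delta q) (q - 1) F)"
    using q inv_irr_curve_fermat by auto
  show "q - 1 \<le> N" if "2 \<le> N \<and> (\<exists>F::'k pp3. inv_irr_curve (Delta q) N F)" for N
    using that invariant_irreducible_degree_dvd by (auto intro: dvd_imp_le)
qed

lemma d'G_Delta: "d'G (Delta q :: ('k^3^3) set) = 2 * (q - 1)"
  unfolding d'G_def dG_Delta
proof (rule Least_equality)
  show "q - 1 < 2 * (q - 1) \<and> (\<exists>F::'k pp3. inv_irr_curve (Delta q) (2 * (q - 1)) F)"
    using q inv_irr_curve_fam_0 by auto
  show "2 * (q - 1) \<le> N" if "q - 1 < N \<and> (\<exists>F::'k pp3. inv_irr_curve (Delta q) N F)" for N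
  proof -
    from that obtain F :: "'k pp3" where "q - 1 < N" "inv_irr_curve (Delta q) N F"
      by blast
    moreover from this have "(q - 1) dvd N"
      using q by (intro invariant_irreducible_degree_dvd) auto
    ultimately show ?thesis
      by (auto elim!: dvdE simp: less_mult_imp_div_less)
  qed
qed

lemma inv_irr_curve_degree_q_minus_1_iff:
  fixes F :: "'k pp3"
  shows "inv_irr_curve (Delta q) (q - 1) F \<longleftrightarrow> (\<exists>c. c \<noteq> 0 \<and> F = const3 c * fermat q)"
proof
  assume "inv_irr_curve (Delta q) (q - 1) F"
  then show "\<exists>c. c \<noteq> 0 \<and> F = const3 c * fermat q"
    by (rule invariant_curve_degree_q_minus_1)
next
  assume "\<exists>c. c \<noteq> 0 \<and> F = const3 c * fermat q"
  then obtain c where "c \<noteq> 0" and "F = const3 c * fermat q"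
    by blast
  with inv_irr_curve_fermat show "inv_irr_curve (Delta q) (q - 1) F"
    by (simp add: inv_irr_curve_def homog_const3_mult irreducible_mult_unit_left[OF is_unit_const3]
        invariant_const3_mult)
qed

lemma inv_irr_curve_degree_2q_minus_2_iff:
  fixes F :: "'k pp3"
  shows "inv_irr_curve (Delta q) (2 * (q - 1)) F \<longleftrightarrow>
    irreducible F \<and> (\<exists>c t. c \<noteq> 0 \<and> F = const3 c * fam q t)"
proof
  assume "inv_irr_curve (Delta q) (2 * (q - 1)) F"
  then show "irreducible F \<and> (\<exists>c t. c \<noteq> 0 \<and> F = const3 c * fam q t)"
    using invariant_curve_degree_2q_minus_2 by (simp add: inv_irr_curve_def)
next
  assume "irreducible F \<and> (\<exists>c t. c \<noteq> 0 \<and> F = const3 c * fam q t)"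
  then obtain c t where "irreducible F" and "c \<noteq> 0" and "F = const3 c * fam q t"
    by blast
  moreover have "2 \<le> q"
    using q by simp
  ultimately show "inv_irr_curve (Delta q) (2 * (q - 1)) F"
    using homog_const3_mult[OF \<open>c \<noteq> 0\<close> homog_fam] invariant_const3_mult[OF invariant_Delta_fam]
    by (simp add: inv_irr_curve_def)
qed

end

theorem mainTheorem12:
  fixes p q m :: nat
  assumes "prime p" and "m \<ge> 1" and "q = p ^ m" and "q \<ge> 3"
    and char: "of_nat p = (0::'k::field)"
    and alg_closed: "\<And>P::'k poly. degree P > 0 \<Longrightarrow> \<exists>x. poly P x = 0"
    and algebraic: "\<And>x::'k. \<exists>P::'k poly. P \<noteq> 0 \<and> (\<forall>i. coeff P i \<in> range of_nat) \<and> poly P x = 0"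
  shows "dG (Delta q :: ('k^3^3) set) = q - 1
    \<and> epsG (Delta q :: ('k^3^3) set) = q - 1
    \<and> (\<forall>F::'k pp3. inv_irr_curve (Delta q) (q - 1) F \<longleftrightarrow> (\<exists>c. c \<noteq> 0 \<and> F = const3 c * fermat q))
    \<and> (\<forall>F::'k pp3. inv_irr_curve (Delta q) (2 * (q - 1)) F \<longleftrightarrow>
          irreducible F \<and> (\<exists>c t. c \<noteq> 0 \<and> F = const3 c * fam q t))"
proof -
  have char_q: "of_nat q = (0::'k)"
    using assms(2,3) char by (simp add: power_0_left)
  note setting = alg_closed \<open>q \<ge> 3\<close> char_q
  show ?thesis
    using dG_Delta[OF setting] d'G_Delta[OF setting] inv_irr_curve_degree_q_minus_1_iff[OF setting]
      inv_irr_curve_degree_2q_minus_2_iff[OF setting]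
    by (simp add: epsG_def)
qed

end
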